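(* Let $(p_1,q_1),\ldots,(p_n,q_n)\in\mathbb{R}^2$ be a Pareto-optimal market and for $(p,q)\in\mathbb{R}^2$ let \[\operatorname{profit}(p,q)=(p-q)\cdot\bigl|\{i: p\le p_i \text{ and } q\ge q_i\}\bigr|.\] Let $q'\le q$ and let $p$ be such that $0<\operatorname{profit}(p,q)\le\operatorname{profit}(p,q')$. Then for every $p'\le p$, $\operatorname{profit}(p',q)\le\operatorname{profit}(p',q')$.
   Context: Customer $(p_i,q_i)$ considers product $(p,q)$ iff $p\le p_i$ and $q\ge q_i$. The market is Pareto-optimal: there are no two customers $i,j$ with $q_i>q_j$ and $p_i<p_j$. *)

theory Defs
  imports Main "HOL.Real"
begin

text \<open>A market of n customers (pp i, qq i), i < n.\<close>

definition pareto_optimal :: "nat \<Rightarrow> (nat \<Rightarrow> real) \<Rightarrow> (nat \<Rightarrow> real) \<Rightarrow> bool" where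
  "pareto_optimal n pp qq \<longleftrightarrow>
     \<not> (\<exists>i<n. \<exists>j<n. qq i > qq j \<and> pp i < pp j)"

definition profit :: "nat \<Rightarrow> (nat \<Rightarrow> real) \<Rightarrow> (nat \<Rightarrow> real) \<Rightarrow> real \<Rightarrow> real \<Rightarrow> real" where
  "profit n pp qq p q = (p - q) * real (card {i. i < n \<and> p \<le> pp i \<and> q \<ge> qq i})"

end

theory Submission
  imports Defs
begin

text \<open>Split the customers who consider (x, q) into those who also consider (x, q') and
  the band B(x) of those with q' < q_i.  Then
  profit(x, q) - profit(x, q') = (x - q) |B(x)| - (q - q') |{i. x \<le> p_i, q_i \<le> q'}|.
  Since profit(p, q') > 0, some customer j has p \<le> p_j and q_j \<le> q'; by Pareto-optimality
  every customer in the band has p_i \<ge> p_j \<ge> p, so B(p') = B(p) for p' \<le> p.  Lowering the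
  price therefore decreases the first term and can only enlarge the second.\<close>

definition considerers :: "nat \<Rightarrow> (nat \<Rightarrow> real) \<Rightarrow> (nat \<Rightarrow> real) \<Rightarrow> real \<Rightarrow> real \<Rightarrow> nat set" where
  "considerers n pp qq p q = {i. i < n \<and> p \<le> pp i \<and> qq i \<le> q}"

lemma finite_considerers [simp]: "finite (considerers n pp qq p q)"
  by (simp add: considerers_def)

lemma profit_considerers: "profit n pp qq p q = (p - q) * real (card (considerers n pp qq p q))"
  by (simp add: profit_def considerers_def)

lemma considerers_antimono_price:
  "p' \<le> p \<Longrightarrow> considerers n pp qq p q \<subseteq> considerers n pp qq p' q"
  by (auto simp: considerers_def)

lemma card_considerers_split:
  assumes "q' \<le> q"
  shows "card (considerers n pp qq p q)
       = card {i \<in> considerers n pp qq p q. q' < qq i} + card (considerers n pp qq p q')"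
proof -
  have "considerers n pp qq p q
      = {i \<in> considerers n pp qq p q. q' < qq i} \<union> considerers n pp qq p q'"
    using assms by (auto simp: considerers_def)
  moreover have "{i \<in> considerers n pp qq p q. q' < qq i} \<inter> considerers n pp qq p q' = {}"
    by (auto simp: considerers_def)
  ultimately show ?thesis
    by (metis (no_types, lifting) card_Un_disjoint finite_considerers finite_Un)
qed

lemma profit_diff:
  assumes "q' \<le> q"
  shows "profit n pp qq p q - profit n pp qq p q'
       = (p - q) * real (card {i \<in> considerers n pp qq p q. q' < qq i})
         - (q - q') * real (card (considerers n pp qq p q'))"
  unfolding profit_considerers card_considerers_split[OF assms] by (simp add: algebra_simps)

lemma pareto_optimal_price_le:
  assumes "pareto_optimal n pp qq" "i < n" "j < n" "qq j < qq i"
  shows "pp j \<le> pp i"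
  using assms unfolding pareto_optimal_def by (meson not_le)

lemma considerers_band_eq:
  assumes "pareto_optimal n pp qq" "j \<in> considerers n pp qq p q'" "p' \<le> p"
  shows "{i \<in> considerers n pp qq p' q. q' < qq i} = {i \<in> considerers n pp qq p q. q' < qq i}"
proof -
  have "p \<le> pp i" if "i < n" "q' < qq i" for i
  proof -
    have "j < n" "p \<le> pp j" "qq j \<le> q'" using assms(2) by (auto simp: considerers_def)
    with that pareto_optimal_price_le[OF assms(1)] show ?thesis by fastforce
  qed
  then show ?thesis using assms(3) by (force simp: considerers_def)
qed

theorem lemma2:
  fixes n :: nat and pp qq :: "nat \<Rightarrow> real" and p q q' :: real
  assumes "pareto_optimal n pp qq"
    and "q' \<le> q"
    and "0 < profit n pp qq p q"
    and "profit n pp qq p q \<le> profit n pp qq p q'"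
  shows "\<forall>p'. p' \<le> p \<longrightarrow> profit n pp qq p' q \<le> profit n pp qq p' q'"
proof (intro allI impI)
  fix p' assume "p' \<le> p"
  let ?B = "\<lambda>x. real (card {i \<in> considerers n pp qq x q. q' < qq i})"
  let ?A = "\<lambda>x. real (card (considerers n pp qq x q'))"
  have "considerers n pp qq p q' \<noteq> {}"
    using assms(3,4) by (auto simp: profit_considerers)
  then obtain j where "j \<in> considerers n pp qq p q'" by blast
  then have "?B p' = ?B p"
    using considerers_band_eq[OF assms(1) _ \<open>p' \<le> p\<close>] by simp
  then have "(p' - q) * ?B p' \<le> (p - q) * ?B p"
    using \<open>p' \<le> p\<close> by (simp add: mult_right_mono)
  also have "\<dots> \<le> (q - q') * ?A p"
    using assms(4) profit_diff[OF assms(2), of n pp qq p] by simp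
  also have "\<dots> \<le> (q - q') * ?A p'"
    using assms(2) card_mono[OF _ considerers_antimono_price[OF \<open>p' \<le> p\<close>]]
    by (simp add: mult_left_mono)
  finally have "(p' - q) * ?B p' \<le> (q - q') * ?A p'" .
  then show "profit n pp qq p' q \<le> profit n pp qq p' q'"
    using profit_diff[OF assms(2), of n pp qq p'] by simp
qed

end
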